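(* Let $\Gamma$ be a gain operator on $\ell^\infty_+(\mathcal I)$ and assume: (i) $\Gamma$ satisfies the $\oplus$-MBI property; (ii) there is $\rho\in\mathcal K_\infty$ such that $\Sigma(\Gamma_\rho)$ is UGAS; (iii) the family $\{\gamma_{ij}^{-1}: ji\in E(\mathcal G)\}$ is pointwise equicontinuous; (iv) there is $\zeta\in\mathcal K_\infty$ such that for all $ji\in E(\mathcal G)$ and all $0\le s^1\le s^2$, $\mu_i(s^2_{|\mathcal I_i})-\mu_i(s^1_{|\mathcal I_i})\ge\zeta(s^2_j-s^1_j)$; (v) the path $\sigma_*(r):=\bigoplus_{n=0}^\infty\hat\Gamma^n(r\mathbf 1)$, $r\ge0$, is norm-continuous. Then for each $r\ge0$ the operator $s\mapsto r\mathbf 1\oplus\Gamma(s)$ has precisely one fixed point.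
   Context: Let $\mathcal I$ be a nonempty countable index set; $\ell^\infty_+(\mathcal I)$ is the cone of nonnegative real families $s=(s_i)_{i\in\mathcal I}$ with $\|s\|:=\sup_i|s_i|<\infty$, ordered componentwise; $\mathbf 1$ is the all-ones vector; $\oplus$ is the componentwise maximum, $\bigoplus$ the componentwise supremum. $\mathcal K$: continuous strictly increasing $\gamma:\mathbb R_+\to\mathbb R_+$ with $\gamma(0)=0$; $\mathcal K_\infty$: unbounded elements of $\mathcal K$, acting componentwise; $\mathcal{KL}$: continuous $\beta$ with $\beta(\cdot,t)\in\mathcal K$ and $\beta(r,\cdot)$ continuous strictly decreasing to $0$ for $r>0$. For $\mathcal J\subset\mathcal I$, $s_{|\mathcal J}$ agrees with $s$ on $\mathcal J$ and is $0$ elsewhere. Gain operator: for each $i$ a finite (possibly empty) $\mathcal I_i\subset\mathcal I\setminus\{i\}$; directed graph $\mathcal G$ with vertices $\mathcal I$ and edges $ji$, $j\in\mathcal I_i$; a pointwise equicontinuous family $\gamma_{ij}\in\mathcal K_\infty$ ($ji\in E(\mathcal G)$) (pointwise equicontinuity: for all $r_0\ge0$, $\varepsilon>0$ there is $\delta>0$ with $|f(r)-f(r_0)|\le\varepsilon$ whenever $|r-r_0|\le\delta$, for all members $f$); functions $\mu_i:\ell^\infty_+(\mathcal I)\to[0,\infty]$ with (M1) some $\xi\in\mathcal K_\infty$ has $\mu_i(0)=0$, $\mu_i(s)\ge\xi(\|s\|)$; (M2) $\mu_i$ monotone; (M3) for each finite $\mathcal J$, $\mu_i$ restricted to vectors vanishing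 off $\mathcal J$ is finite-valued and continuous; (M4) for each norm-bounded $A$ and $\varepsilon>0$ there is $\delta>0$ with $\sup_i|\mu_i(s_{|\mathcal I_i})-\mu_i(s^0_{|\mathcal I_i})|\le\varepsilon$ whenever $s^0\in A$, $\|s-s^0\|\le\delta$. $\Gamma_i(s):=\mu_i([\gamma_{ij}(s_j)]_{j\in\mathcal I_i})$ (argument zero outside $\mathcal I_i$). $\Gamma_\rho:=(\mathrm{id}+\rho)\circ\Gamma$, $\hat\Gamma(s):=s\oplus\Gamma(s)$. $\Sigma(T)$ is the system $s^{n+1}=T(s^n)$; UGAS: $\|T^n(s)\|\le\beta(\|s\|,n)$ for some $\beta\in\mathcal{KL}$. $\oplus$-MBI property: there is $\varphi\in\mathcal K_\infty$ such that for all $s,b$, $s\le b\oplus\Gamma(s)$ implies $\|s\|\le\varphi(\|b\|)$. *)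

theory Defs
  imports "HOL-Analysis.Analysis"
begin

definition linf_plus :: "('i \<Rightarrow> real) set" where
  "linf_plus = {s. (\<forall>i. 0 \<le> s i) \<and> bounded (range s)}"

definition nrm :: "('i \<Rightarrow> real) \<Rightarrow> real" where
  "nrm s = (SUP i. \<bar>s i\<bar>)"

definition restr :: "'i set \<Rightarrow> ('i \<Rightarrow> real) \<Rightarrow> ('i \<Rightarrow> real)" where
  "restr J s = (\<lambda>i. if i \<in> J then s i else 0)"

definition class_K :: "(real \<Rightarrow> real) \<Rightarrow> bool" where
  "class_K g \<longleftrightarrow> continuous_on {0..} g \<and> strict_mono_on {0..} g \<and> g 0 = 0"

definition class_Kinf :: "(real \<Rightarrow> real) \<Rightarrow> bool" where
  "class_Kinf g \<longleftrightarrow> class_K g \<and> (\<forall>M. \<exists>r\<ge>0. M \<le> g r)"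

definition class_KL :: "(real \<Rightarrow> real \<Rightarrow> real) \<Rightarrow> bool" where
  "class_KL \<beta> \<longleftrightarrow> continuous_on ({0..} \<times> {0..}) (\<lambda>(r,t). \<beta> r t)
     \<and> (\<forall>t\<ge>0. class_K (\<lambda>r. \<beta> r t))
     \<and> (\<forall>r>0. continuous_on {0..} (\<beta> r) \<and> strict_antimono_on {0..} (\<beta> r)
                \<and> ((\<beta> r) \<longlongrightarrow> 0) at_top)"

definition ptw_equicont :: "(real \<Rightarrow> real) set \<Rightarrow> bool" where
  "ptw_equicont F \<longleftrightarrow> (\<forall>r0\<ge>0. \<forall>\<epsilon>>0. \<exists>\<delta>>0. \<forall>f\<in>F. \<forall>r\<ge>0.
      \<bar>r - r0\<bar> \<le> \<delta> \<longrightarrow> \<bar>f r - f r0\<bar> \<le> \<epsilon>)"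

text \<open>Gain operator data: neighbour sets Ii, gains gam i j (edge ji, j in Ii i),
  aggregation functions mu i with values in [0,\<infinity>].\<close>

definition gain_operator ::
  "('i \<Rightarrow> 'i set) \<Rightarrow> ('i \<Rightarrow> 'i \<Rightarrow> real \<Rightarrow> real) \<Rightarrow> ('i \<Rightarrow> ('i \<Rightarrow> real) \<Rightarrow> ereal) \<Rightarrow> bool" where
  "gain_operator Ii gam mu \<longleftrightarrow>
     (\<forall>i. finite (Ii i) \<and> i \<notin> Ii i)
   \<and> (\<forall>i. \<forall>j\<in>Ii i. class_Kinf (gam i j))
   \<and> ptw_equicont {gam i j | i j. j \<in> Ii i}
   \<and> (\<forall>i. \<forall>s\<in>linf_plus. 0 \<le> mu i s)
   \<comment> \<open>(M1)\<close>
   \<and> (\<exists>\<xi>. class_Kinf \<xi> \<and> (\<forall>i. mu i (\<lambda>_. 0) = 0 \<and>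
          (\<forall>s\<in>linf_plus. ereal (\<xi> (nrm s)) \<le> mu i s)))
   \<comment> \<open>(M2)\<close>
   \<and> (\<forall>i. \<forall>s\<in>linf_plus. \<forall>t\<in>linf_plus. (\<forall>k. s k \<le> t k) \<longrightarrow> mu i s \<le> mu i t)
   \<comment> \<open>(M3)\<close>
   \<and> (\<forall>i. \<forall>J. finite J \<longrightarrow>
        (let V = {s\<in>linf_plus. \<forall>k. k \<notin> J \<longrightarrow> s k = 0} in
          (\<forall>s\<in>V. \<bar>mu i s\<bar> \<noteq> \<infinity>) \<and>
          (\<forall>s\<in>V. \<forall>\<epsilon>>0. \<exists>\<delta>>0. \<forall>t\<in>V. nrm (\<lambda>k. t k - s k) \<le> \<delta> \<longrightarrow>
               \<bar>real_of_ereal (mu i t) - real_of_ereal (mu i s)\<bar> \<le> \<epsilon>)))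
   \<comment> \<open>(M4)\<close>
   \<and> (\<forall>A \<subseteq> linf_plus. (\<exists>C. \<forall>s\<in>A. nrm s \<le> C) \<longrightarrow>
        (\<forall>\<epsilon>>0. \<exists>\<delta>>0. \<forall>s0\<in>A. \<forall>s\<in>linf_plus. nrm (\<lambda>k. s k - s0 k) \<le> \<delta> \<longrightarrow>
           (\<forall>i. \<bar>real_of_ereal (mu i (restr (Ii i) s)) - real_of_ereal (mu i (restr (Ii i) s0))\<bar> \<le> \<epsilon>)))"

definition Gam ::
  "('i \<Rightarrow> 'i set) \<Rightarrow> ('i \<Rightarrow> 'i \<Rightarrow> real \<Rightarrow> real) \<Rightarrow> ('i \<Rightarrow> ('i \<Rightarrow> real) \<Rightarrow> ereal)
   \<Rightarrow> ('i \<Rightarrow> real) \<Rightarrow> ('i \<Rightarrow> real)" where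
  "Gam Ii gam mu s = (\<lambda>i. real_of_ereal (mu i (\<lambda>j. if j \<in> Ii i then gam i j (s j) else 0)))"

definition Gam_rho where
  "Gam_rho Ii gam mu \<rho> s = (\<lambda>i. Gam Ii gam mu s i + \<rho> (Gam Ii gam mu s i))"

definition Gam_hat where
  "Gam_hat Ii gam mu s = (\<lambda>i. max (s i) (Gam Ii gam mu s i))"

definition UGAS :: "(('i \<Rightarrow> real) \<Rightarrow> ('i \<Rightarrow> real)) \<Rightarrow> bool" where
  "UGAS T \<longleftrightarrow> (\<exists>\<beta>. class_KL \<beta> \<and>
     (\<forall>s\<in>linf_plus. \<forall>n::nat. nrm ((T ^^ n) s) \<le> \<beta> (nrm s) (real n)))"

definition oplus_MBI where
  "oplus_MBI Ii gam mu \<longleftrightarrow> (\<exists>\<phi>. class_Kinf \<phi> \<and>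
     (\<forall>s\<in>linf_plus. \<forall>b\<in>linf_plus.
        (\<forall>i. s i \<le> max (b i) (Gam Ii gam mu s i)) \<longrightarrow> nrm s \<le> \<phi> (nrm b)))"

definition sigma_star where
  "sigma_star Ii gam mu r = (\<lambda>i. SUP n::nat. ((Gam_hat Ii gam mu ^^ n) (\<lambda>_. r)) i)"

end

theory Submission
  imports Defs
begin

(* Existence: the iterates of the monotone operator Gam_hat, started at the constant r, increase;
   the oplus-MBI property bounds them, so they converge componentwise to sigma_star r, and the
   continuity of Gam along such limits makes sigma_star r a fixed point, indeed the least
   supersolution above r.

   Uniqueness for r > 0 (for r = 0 the MBI property forces s = 0): let s be a fixed point.
   Continuity of sigma_star makes the set of levels r' >= r with s <= sigma_star r' closed, so it
   has a least element r0.  Suppose r0 > r.  Where Gam s <= r we have s = r, a gap of at least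
   r0 - r below sigma_star r0.  Every other node lies within N edges of such a node, since
   otherwise s <= Gam^N s < r by UGAS.  Along an edge ji the gap is passed on with a uniform lower
   bound: equicontinuity of the inverse gains turns a gap e into a gain increment m > 0, which
   the zeta-condition turns into a gap zeta m at i.  Hence s + e <= sigma_star r0 for some e > 0,
   and continuity yields a smaller admissible level, a contradiction.  So r0 = r and
   s = sigma_star r. *)

lemma linf_plusI: "(\<And>i. 0 \<le> s i) \<Longrightarrow> (\<And>i. s i \<le> C) \<Longrightarrow> s \<in> linf_plus"
  unfolding linf_plus_def bounded_iff by (auto intro!: exI[of _ C])

lemma linf_plus_nonneg: "s \<in> linf_plus \<Longrightarrow> 0 \<le> s i"
  unfolding linf_plus_def by auto

lemma abs_le_nrm: "(\<And>i. \<bar>s i\<bar> \<le> C) \<Longrightarrow> \<bar>s i\<bar> \<le> nrm s"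
  unfolding nrm_def by (rule cSUP_upper) (auto intro!: bdd_aboveI2)

lemma nrm_le: "(\<And>i. \<bar>s i\<bar> \<le> C) \<Longrightarrow> nrm s \<le> C"
  unfolding nrm_def by (rule cSUP_least) auto

lemma nrm_const: "nrm (\<lambda>_. c) = \<bar>c\<bar>"
  unfolding nrm_def by simp

lemma linf_plus_le_nrm:
  assumes "s \<in> linf_plus" shows "s i \<le> nrm s"
proof -
  obtain C where "\<And>i. norm (s i) \<le> C"
    using assms unfolding linf_plus_def bounded_iff by blast
  then show ?thesis using abs_le_nrm[of s C i] by simp
qed

lemma abs_diff_le_nrm:
  assumes "s \<in> linf_plus" "t \<in> linf_plus" shows "\<bar>s i - t i\<bar> \<le> nrm (\<lambda>k. s k - t k)"
proof -
  have "\<bar>s k - t k\<bar> \<le> nrm s + nrm t" for k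
    using linf_plus_le_nrm[OF assms(1), of k] linf_plus_le_nrm[OF assms(2), of k]
      linf_plus_nonneg[OF assms(1), of k] linf_plus_nonneg[OF assms(2), of k] by linarith
  then show ?thesis using abs_le_nrm[of "\<lambda>k. s k - t k"] by blast
qed

lemma class_K_mono: "class_K f \<Longrightarrow> 0 \<le> a \<Longrightarrow> a \<le> b \<Longrightarrow> f a \<le> f b"
  unfolding class_K_def by (auto intro: strict_mono_on_leD)

lemma class_K_nonneg: "class_K f \<Longrightarrow> 0 \<le> a \<Longrightarrow> 0 \<le> f a"
  using class_K_mono[of f 0 a] unfolding class_K_def by auto

lemma class_K_pos: "class_K f \<Longrightarrow> 0 < a \<Longrightarrow> 0 < f a"
  unfolding class_K_def using strict_mono_onD[of "{0..}" f 0 a] by auto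

lemma class_K_inv_into: "class_K f \<Longrightarrow> 0 \<le> a \<Longrightarrow> inv_into {0..} f (f a) = a"
  unfolding class_K_def by (auto intro!: inv_into_f_f strict_mono_on_imp_inj_on)

lemma ptw_equicont_uniform_on_Icc:
  assumes F: "ptw_equicont F" and "0 < \<epsilon>"
  obtains e where "0 < e"
    "\<And>f x y. f \<in> F \<Longrightarrow> x \<in> {0..C} \<Longrightarrow> 0 \<le> y \<Longrightarrow> \<bar>y - x\<bar> < e \<Longrightarrow> \<bar>f y - f x\<bar> \<le> \<epsilon>"
proof -
  have "\<exists>\<delta>. 0 \<le> r0 \<longrightarrow> \<delta> > 0 \<and> (\<forall>f\<in>F. \<forall>r\<ge>0. \<bar>r - r0\<bar> \<le> \<delta> \<longrightarrow> \<bar>f r - f r0\<bar> \<le> \<epsilon>/2)"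
    for r0
  proof (cases "0 \<le> r0")
    case True
    then show ?thesis using F[unfolded ptw_equicont_def, rule_format, OF True, of "\<epsilon>/2"] \<open>0 < \<epsilon>\<close>
      by auto
  qed auto
  then obtain D where D: "\<And>r0. 0 \<le> r0 \<Longrightarrow>
      D r0 > 0 \<and> (\<forall>f\<in>F. \<forall>r\<ge>0. \<bar>r - r0\<bar> \<le> D r0 \<longrightarrow> \<bar>f r - f r0\<bar> \<le> \<epsilon>/2)"
    by metis
  have "{0..C} \<subseteq> \<Union>((\<lambda>r0. ball r0 (D r0)) ` {0..C})"
  proof
    fix x assume "x \<in> {0..C}"
    then show "x \<in> \<Union>((\<lambda>r0. ball r0 (D r0)) ` {0..C})"
      using D[of x] by (intro UN_I[of x]) auto
  qed
  from Heine_Borel_lemma[OF compact_Icc this] obtain e where e: "0 < e"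
    "\<And>x. x \<in> {0..C} \<Longrightarrow> \<exists>G \<in> (\<lambda>r0. ball r0 (D r0)) ` {0..C}. ball x e \<subseteq> G"
    by auto
  show thesis
  proof (rule that[OF e(1)])
    fix f x y assume f: "f \<in> F" and x: "x \<in> {0..C}" and y: "0 \<le> y" "\<bar>y - x\<bar> < e"
    \<comment> \<open>both points lie in one ball of the Lebesgue covering, so compare each with its centre\<close>
    obtain z where z: "z \<in> {0..C}" "ball x e \<subseteq> ball z (D z)" using e(2)[OF x] by auto
    have "x \<in> ball z (D z)" "y \<in> ball z (D z)"
      using z(2) e(1) y(2) by (auto simp: dist_real_def subset_iff)
    then have "\<bar>x - z\<bar> \<le> D z" "\<bar>y - z\<bar> \<le> D z" by (auto simp: dist_real_def)
    then have "\<bar>f x - f z\<bar> \<le> \<epsilon>/2" "\<bar>f y - f z\<bar> \<le> \<epsilon>/2"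
      using D[of z] f x y z(1) by auto
    then show "\<bar>f y - f x\<bar> \<le> \<epsilon>" by linarith
  qed
qed

lemma uniformly_equicontinuous_bounded_on_Icc:
  fixes g :: "'p \<Rightarrow> real \<Rightarrow> real"
  assumes "0 < e" and zero: "\<And>p. p \<in> P \<Longrightarrow> g p 0 = 0"
    and step: "\<And>p x y. p \<in> P \<Longrightarrow> x \<in> {0..C} \<Longrightarrow> y \<in> {0..C} \<Longrightarrow> \<bar>y - x\<bar> \<le> e \<Longrightarrow>
      \<bar>g p y - g p x\<bar> \<le> 1"
  obtains K where "\<And>p x. p \<in> P \<Longrightarrow> x \<in> {0..C} \<Longrightarrow> \<bar>g p x\<bar> \<le> K"
proof -
  obtain n :: nat where "C / e \<le> real n" using real_arch_simple by blast
  define N where "N = Suc n"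
  have "C \<le> real N * e" using \<open>C / e \<le> real n\<close> \<open>0 < e\<close> by (simp add: N_def field_simps)
  have walk: "\<bar>g p (real k * x / N)\<bar> \<le> real k" if p: "p \<in> P" and x: "x \<in> {0..C}" and "k \<le> N"
    for p x k
    using \<open>k \<le> N\<close>
  proof (induction k)
    case 0
    then show ?case using zero[OF p] by simp
  next
    case (Suc k)
    have "0 \<le> x" using x by simp
    then have "real k * x \<le> x * real N" "real (Suc k) * x \<le> x * real N"
      using Suc.prems by (simp_all add: mult.commute mult_left_mono)
    then have "real k * x / N \<le> x" "real (Suc k) * x / N \<le> x"
      unfolding N_def by (simp_all only: pos_divide_le_eq of_nat_0_less_iff zero_less_Suc)
    moreover have "real (Suc k) * x / N - real k * x / N = x / N"
      by (simp add: diff_divide_distrib[symmetric] algebra_simps)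
    moreover have "x / N \<le> e"
      using x \<open>C \<le> real N * e\<close> by (auto simp: N_def field_simps)
    ultimately have "\<bar>g p (real (Suc k) * x / N) - g p (real k * x / N)\<bar> \<le> 1"
      using x by (intro step[OF p]) (auto simp: field_simps)
    then show ?case using Suc by simp
  qed
  show thesis
  proof (rule that)
    fix p x assume "p \<in> P" "x \<in> {0..C}"
    then show "\<bar>g p x\<bar> \<le> real N" using walk[of p x N] by (simp add: N_def)
  qed
qed

lemma ptw_equicont_bounded_on_Icc:
  assumes F: "ptw_equicont F" and zero: "\<And>f. f \<in> F \<Longrightarrow> f 0 = 0"
  obtains K where "\<And>f x. f \<in> F \<Longrightarrow> x \<in> {0..C} \<Longrightarrow> \<bar>f x\<bar> \<le> K"
proof -
  obtain e where e: "0 < e"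
    "\<And>f x y. f \<in> F \<Longrightarrow> x \<in> {0..C} \<Longrightarrow> 0 \<le> y \<Longrightarrow> \<bar>y - x\<bar> < e \<Longrightarrow> \<bar>f y - f x\<bar> \<le> 1"
    using ptw_equicont_uniform_on_Icc[OF F zero_less_one] by blast
  have "0 < e / 2" using e(1) by simp
  then show thesis
    using uniformly_equicontinuous_bounded_on_Icc[of "e/2" F "\<lambda>f. f" C] zero e that by force
qed

lemma uniform_increment_lower_bound:
  assumes K: "\<And>f. f \<in> F \<Longrightarrow> class_K f" and F: "ptw_equicont F"
    and inv: "ptw_equicont ((\<lambda>f. inv_into {0..} f) ` F)" and "0 < \<eta>"
  obtains m where "0 < m" "\<And>f a. f \<in> F \<Longrightarrow> a \<in> {0..M} \<Longrightarrow> m \<le> f (a + \<eta>) - f a"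
proof -
  obtain B where B: "\<And>f x. f \<in> F \<Longrightarrow> x \<in> {0..M + \<eta>} \<Longrightarrow> \<bar>f x\<bar> \<le> B"
    using ptw_equicont_bounded_on_Icc[OF F] K unfolding class_K_def by metis
  obtain e where e: "0 < e" "\<And>h y y'. h \<in> (\<lambda>f. inv_into {0..} f) ` F \<Longrightarrow> y \<in> {0..B} \<Longrightarrow>
      0 \<le> y' \<Longrightarrow> \<bar>y' - y\<bar> < e \<Longrightarrow> \<bar>h y' - h y\<bar> \<le> \<eta> / 2"
    using ptw_equicont_uniform_on_Icc[OF inv, of "\<eta> / 2"] \<open>0 < \<eta>\<close> by auto
  show thesis
  proof (rule that[OF e(1)])
    fix f a assume f: "f \<in> F" and a: "a \<in> {0..M}"
    show "e \<le> f (a + \<eta>) - f a"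
    proof (rule ccontr)
      assume "\<not> e \<le> f (a + \<eta>) - f a"
      \<comment> \<open>then the inverse would move the nearby values f a, f (a + \<eta>) apart by \<eta>\<close>
      moreover have "0 \<le> f a" "f a \<le> f (a + \<eta>)" "f a \<le> B"
        using class_K_nonneg[OF K[OF f]] class_K_mono[OF K[OF f]] B[OF f, of a] a \<open>0 < \<eta>\<close> by auto
      ultimately have "\<bar>inv_into {0..} f (f (a + \<eta>)) - inv_into {0..} f (f a)\<bar> \<le> \<eta> / 2"
        using f by (intro e(2)) auto
      then show False
        using class_K_inv_into[OF K[OF f]] a \<open>0 < \<eta>\<close> by simp
    qed
  qed
qed

primrec reach_within :: "('i \<Rightarrow> 'i set) \<Rightarrow> 'i set \<Rightarrow> nat \<Rightarrow> 'i set" where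
  "reach_within Ii X 0 = X"
| "reach_within Ii X (Suc k) = reach_within Ii X k \<union> {i. \<exists>j\<in>Ii i. j \<in> reach_within Ii X k}"

lemma subset_reach_within: "X \<subseteq> reach_within Ii X k"
  by (induction k) auto

definition mu_sensitive :: "('i \<Rightarrow> 'i set) \<Rightarrow> ('i \<Rightarrow> ('i \<Rightarrow> real) \<Rightarrow> ereal) \<Rightarrow> (real \<Rightarrow> real) \<Rightarrow> bool"
  where "mu_sensitive Ii mu \<zeta> \<longleftrightarrow>
    (\<forall>i. \<forall>j\<in>Ii i. \<forall>s1\<in>linf_plus. \<forall>s2\<in>linf_plus. (\<forall>k. s1 k \<le> s2 k) \<longrightarrow>
       real_of_ereal (mu i (restr (Ii i) s2)) - real_of_ereal (mu i (restr (Ii i) s1)) \<ge> \<zeta> (s2 j - s1 j))"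

locale gain_setting =
  fixes Ii :: "'i \<Rightarrow> 'i set" and gam :: "'i \<Rightarrow> 'i \<Rightarrow> real \<Rightarrow> real"
    and mu :: "'i \<Rightarrow> ('i \<Rightarrow> real) \<Rightarrow> ereal"
  assumes finite_neighbours: "finite (Ii i)"
    and gain_class_K: "j \<in> Ii i \<Longrightarrow> class_K (gam i j)"
    and gains_equicont: "ptw_equicont {gam i j | i j. j \<in> Ii i}"
    and mu_nonneg: "s \<in> linf_plus \<Longrightarrow> 0 \<le> mu i s"
    and mu_zero: "mu i (\<lambda>_. 0) = 0"
    and mu_mono: "s \<in> linf_plus \<Longrightarrow> t \<in> linf_plus \<Longrightarrow> (\<And>k. s k \<le> t k) \<Longrightarrow> mu i s \<le> mu i t"
    and mu_finite: "s \<in> linf_plus \<Longrightarrow> \<forall>k. k \<notin> Ii i \<longrightarrow> s k = 0 \<Longrightarrow> \<bar>mu i s\<bar> \<noteq> \<infinity>"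
    and mu_continuous: "s \<in> linf_plus \<Longrightarrow> \<forall>k. k \<notin> Ii i \<longrightarrow> s k = 0 \<Longrightarrow> 0 < \<epsilon> \<Longrightarrow>
      \<exists>\<delta>>0. \<forall>t\<in>linf_plus. (\<forall>k. k \<notin> Ii i \<longrightarrow> t k = 0) \<longrightarrow> nrm (\<lambda>k. t k - s k) \<le> \<delta> \<longrightarrow>
        \<bar>real_of_ereal (mu i t) - real_of_ereal (mu i s)\<bar> \<le> \<epsilon>"
    and mu_restr_uniformly_equicont: "A \<subseteq> linf_plus \<Longrightarrow> \<forall>s\<in>A. nrm s \<le> C \<Longrightarrow> 0 < \<epsilon> \<Longrightarrow>
      \<exists>\<delta>>0. \<forall>s0\<in>A. \<forall>s\<in>linf_plus. nrm (\<lambda>k. s k - s0 k) \<le> \<delta> \<longrightarrow>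
        (\<forall>i. \<bar>real_of_ereal (mu i (restr (Ii i) s)) - real_of_ereal (mu i (restr (Ii i) s0))\<bar> \<le> \<epsilon>)"

lemma gain_operator_imp_gain_setting:
  assumes "gain_operator Ii gam mu" shows "gain_setting Ii gam mu"
proof -
  note G = assms[unfolded gain_operator_def Let_def]
  have fin: "finite (Ii i)" for i using G by (elim conjE) simp
  have M3: "\<forall>i J. finite J \<longrightarrow>
      (\<forall>s\<in>{s\<in>linf_plus. \<forall>k. k \<notin> J \<longrightarrow> s k = 0}. \<bar>mu i s\<bar> \<noteq> \<infinity>) \<and>
      (\<forall>s\<in>{s\<in>linf_plus. \<forall>k. k \<notin> J \<longrightarrow> s k = 0}. \<forall>\<epsilon>>0. \<exists>\<delta>>0.
         \<forall>t\<in>{s\<in>linf_plus. \<forall>k. k \<notin> J \<longrightarrow> s k = 0}. nrm (\<lambda>k. t k - s k) \<le> \<delta> \<longrightarrow>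
           \<bar>real_of_ereal (mu i t) - real_of_ereal (mu i s)\<bar> \<le> \<epsilon>)"
    using G by (elim conjE)
  have M4: "\<forall>A \<subseteq> linf_plus. (\<exists>C. \<forall>s\<in>A. nrm s \<le> C) \<longrightarrow>
      (\<forall>\<epsilon>>0. \<exists>\<delta>>0. \<forall>s0\<in>A. \<forall>s\<in>linf_plus. nrm (\<lambda>k. s k - s0 k) \<le> \<delta> \<longrightarrow>
        (\<forall>i. \<bar>real_of_ereal (mu i (restr (Ii i) s)) - real_of_ereal (mu i (restr (Ii i) s0))\<bar> \<le> \<epsilon>))"
    using G by (elim conjE)
  show ?thesis
  proof
    show "finite (Ii i)" for i by (rule fin)
    show "class_K (gam i j)" if "j \<in> Ii i" for i j
      using G that unfolding class_Kinf_def by (elim conjE) simp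
    show "ptw_equicont {gam i j | i j. j \<in> Ii i}" using G by (elim conjE)
    show "0 \<le> mu i s" if "s \<in> linf_plus" for i s using G that by (elim conjE) simp
    show "mu i (\<lambda>_. 0) = 0" for i using G by (elim conjE exE) simp
    show "mu i s \<le> mu i t" if "s \<in> linf_plus" "t \<in> linf_plus" "\<And>k. s k \<le> t k" for i s t
      using G that by (elim conjE) simp
    show "\<bar>mu i s\<bar> \<noteq> \<infinity>" if "s \<in> linf_plus" "\<forall>k. k \<notin> Ii i \<longrightarrow> s k = 0" for i s
      using M3[rule_format, where i=i and J="Ii i", OF fin] that by auto
    show "\<exists>\<delta>>0. \<forall>t\<in>linf_plus. (\<forall>k. k \<notin> Ii i \<longrightarrow> t k = 0) \<longrightarrow> nrm (\<lambda>k. t k - s k) \<le> \<delta> \<longrightarrow>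
        \<bar>real_of_ereal (mu i t) - real_of_ereal (mu i s)\<bar> \<le> \<epsilon>"
      if "s \<in> linf_plus" "\<forall>k. k \<notin> Ii i \<longrightarrow> s k = 0" "0 < \<epsilon>" for i s \<epsilon>
    proof -
      have "s \<in> {s\<in>linf_plus. \<forall>k. k \<notin> Ii i \<longrightarrow> s k = 0}" using that(1,2) by simp
      from M3[rule_format, where i=i and J="Ii i", OF fin, THEN conjunct2, rule_format, OF this that(3)]
      show ?thesis by auto
    qed
    show "\<exists>\<delta>>0. \<forall>s0\<in>A. \<forall>s\<in>linf_plus. nrm (\<lambda>k. s k - s0 k) \<le> \<delta> \<longrightarrow>
        (\<forall>i. \<bar>real_of_ereal (mu i (restr (Ii i) s)) - real_of_ereal (mu i (restr (Ii i) s0))\<bar> \<le> \<epsilon>)"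
      if "A \<subseteq> linf_plus" "\<forall>s\<in>A. nrm s \<le> C" "0 < \<epsilon>" for A C \<epsilon>
    proof -
      have "\<exists>C. \<forall>s\<in>A. nrm s \<le> C" using that(2) by blast
      from M4[rule_format, OF that(1) this that(3)] show ?thesis .
    qed
  qed
qed

context gain_setting
begin

abbreviation \<Gamma> :: "('i \<Rightarrow> real) \<Rightarrow> 'i \<Rightarrow> real" where
  "\<Gamma> \<equiv> Gam Ii gam mu"

definition gain_input :: "'i \<Rightarrow> ('i \<Rightarrow> real) \<Rightarrow> 'i \<Rightarrow> real" where
  "gain_input i s = (\<lambda>j. if j \<in> Ii i then gam i j (s j) else 0)"

lemma Gam_gain_input: "\<Gamma> s i = real_of_ereal (mu i (gain_input i s))"
  unfolding Gam_def gain_input_def ..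

lemma gain_input_outside: "\<forall>k. k \<notin> Ii i \<longrightarrow> gain_input i s k = 0"
  unfolding gain_input_def by simp

lemma restr_gain_input: "restr (Ii i) (gain_input i s) = gain_input i s"
  unfolding restr_def gain_input_def by auto

lemma gain_input_in_linf_plus:
  assumes "\<And>j. 0 \<le> s j" shows "gain_input i s \<in> linf_plus"
proof (rule linf_plusI)
  show nonneg: "0 \<le> gain_input i s k" for k
    using assms gain_class_K class_K_nonneg unfolding gain_input_def by auto
  show "gain_input i s k \<le> (\<Sum>j\<in>Ii i. gain_input i s j)" for k
  proof (cases "k \<in> Ii i")
    case True
    then show ?thesis using member_le_sum[of k "Ii i"] finite_neighbours nonneg by blast
  next
    case False
    have "0 \<le> (\<Sum>j\<in>Ii i. gain_input i s j)" by (rule sum_nonneg) (rule nonneg)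
    with False show ?thesis by (simp add: gain_input_outside)
  qed
qed

lemma mu_gain_input:
  assumes "\<And>j. 0 \<le> s j" shows "mu i (gain_input i s) = ereal (\<Gamma> s i)"
proof -
  have "gain_input i s \<in> linf_plus" by (rule gain_input_in_linf_plus) (rule assms)
  then have "\<bar>mu i (gain_input i s)\<bar> \<noteq> \<infinity>"
    by (rule mu_finite[OF _ gain_input_outside])
  then show ?thesis unfolding Gam_gain_input by (simp add: ereal_real')
qed

lemma Gam_nonneg:
  assumes "\<And>j. 0 \<le> s j" shows "0 \<le> \<Gamma> s i"
proof -
  have "gain_input i s \<in> linf_plus" by (rule gain_input_in_linf_plus) (rule assms)
  then have "0 \<le> mu i (gain_input i s)" by (rule mu_nonneg)
  then show ?thesis by (simp add: mu_gain_input assms)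
qed

lemma Gam_mono:
  assumes s: "\<And>j. 0 \<le> s j" and le: "\<And>j. s j \<le> t j" shows "\<Gamma> s i \<le> \<Gamma> t i"
proof -
  have t: "0 \<le> t j" for j using s[of j] le[of j] by linarith
  have "gain_input i s k \<le> gain_input i t k" for k
    using gain_class_K class_K_mono s le unfolding gain_input_def by auto
  moreover have "gain_input i s \<in> linf_plus" by (rule gain_input_in_linf_plus) (rule s)
  moreover have "gain_input i t \<in> linf_plus" by (rule gain_input_in_linf_plus) (rule t)
  ultimately have "mu i (gain_input i s) \<le> mu i (gain_input i t)"
    by (intro mu_mono)
  then show ?thesis by (simp add: mu_gain_input s t)
qed

lemma Gam_cong:
  assumes "\<And>j. j \<in> Ii i \<Longrightarrow> s j = t j" shows "\<Gamma> s i = \<Gamma> t i"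
proof -
  have "gain_input i s = gain_input i t" using assms by (auto simp: gain_input_def)
  then show ?thesis by (simp add: Gam_gain_input)
qed

lemma mu_restr_const_bounded:
  assumes "0 \<le> K"
  obtains B where "\<And>i. real_of_ereal (mu i (restr (Ii i) (\<lambda>_. K))) \<le> B"
proof -
  define g where "g i x = real_of_ereal (mu i (restr (Ii i) (\<lambda>_. x)))" for i x
  define A where "A = (\<lambda>x. \<lambda>_::'i. x) ` {0..K}"
  have const_in: "(\<lambda>_::'i. x) \<in> linf_plus" if "0 \<le> x" for x
    using that by (intro linf_plusI[of _ x]) auto
  have A_in: "A \<subseteq> linf_plus" unfolding A_def using const_in by auto
  have A_bounded: "\<forall>s\<in>A. nrm s \<le> K" unfolding A_def by (simp add: nrm_const)
  obtain \<delta> where \<delta>: "0 < \<delta>" "\<forall>s0\<in>A. \<forall>s\<in>linf_plus. nrm (\<lambda>k. s k - s0 k) \<le> \<delta> \<longrightarrow>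
      (\<forall>i. \<bar>real_of_ereal (mu i (restr (Ii i) s)) - real_of_ereal (mu i (restr (Ii i) s0))\<bar> \<le> 1)"
    using mu_restr_uniformly_equicont[OF A_in A_bounded zero_less_one] by blast
  have step: "\<bar>g i y - g i x\<bar> \<le> 1" if "x \<in> {0..K}" "y \<in> {0..K}" "\<bar>y - x\<bar> \<le> \<delta>" for i x y
  proof -
    have "(\<lambda>_::'i. x) \<in> A" using that(1) unfolding A_def by blast
    moreover have "(\<lambda>_::'i. y) \<in> linf_plus" using that(2) const_in by simp
    moreover have "nrm (\<lambda>k. (\<lambda>_::'i. y) k - (\<lambda>_::'i. x) k) \<le> \<delta>"
      using that(3) by (simp add: nrm_const)
    ultimately show ?thesis unfolding g_def by (rule \<delta>(2)[rule_format])
  qed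
  have zero: "g i 0 = 0" for i
    unfolding g_def restr_def by (simp add: mu_zero)
  obtain B where B: "\<And>i x. i \<in> UNIV \<Longrightarrow> x \<in> {0..K} \<Longrightarrow> \<bar>g i x\<bar> \<le> B"
    using uniformly_equicontinuous_bounded_on_Icc[of \<delta> UNIV g K, OF \<delta>(1) zero step] by blast
  have "g i K \<le> B" for i using B[of i K] \<open>0 \<le> K\<close> by simp
  then show thesis by (intro that) (simp add: g_def)
qed

lemma Gam_in_linf_plus:
  assumes s: "s \<in> linf_plus" shows "\<Gamma> s \<in> linf_plus"
proof -
  have "f 0 = 0" if "f \<in> {gam i j | i j. j \<in> Ii i}" for f
    using that gain_class_K unfolding class_K_def by auto
  then obtain K where K: "\<And>f x. f \<in> {gam i j | i j. j \<in> Ii i} \<Longrightarrow> x \<in> {0..nrm s} \<Longrightarrow> \<bar>f x\<bar> \<le> K"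
    using ptw_equicont_bounded_on_Icc[OF gains_equicont] by blast
  obtain B where B: "\<And>i. real_of_ereal (mu i (restr (Ii i) (\<lambda>_. \<bar>K\<bar>))) \<le> B"
    using mu_restr_const_bounded[OF abs_ge_zero] by blast
  have s_nonneg: "0 \<le> s j" for j using linf_plus_nonneg[OF s] .
  have "\<Gamma> s i \<le> B" for i
  proof -
    have bound_in: "restr (Ii i) (\<lambda>_. \<bar>K\<bar>) \<in> linf_plus"
      unfolding restr_def by (rule linf_plusI[of _ "\<bar>K\<bar>"]) auto
    have "gain_input i s k \<le> restr (Ii i) (\<lambda>_. \<bar>K\<bar>) k" for k
    proof (cases "k \<in> Ii i")
      case True
      then have "\<bar>gam i k (s k)\<bar> \<le> K"
        using s_nonneg[of k] linf_plus_le_nrm[OF s, of k] by (intro K) auto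
      then show ?thesis using True unfolding gain_input_def restr_def by simp
    qed (simp add: gain_input_def restr_def)
    moreover have input_in: "gain_input i s \<in> linf_plus"
      using gain_input_in_linf_plus[of s, OF s_nonneg] .
    ultimately have "mu i (gain_input i s) \<le> mu i (restr (Ii i) (\<lambda>_. \<bar>K\<bar>))"
      using mu_mono[OF input_in bound_in] by blast
    moreover have "mu i (restr (Ii i) (\<lambda>_. \<bar>K\<bar>)) \<noteq> \<infinity>"
      using mu_finite[where i=i, OF bound_in] unfolding restr_def by auto
    ultimately have "real_of_ereal (mu i (gain_input i s)) \<le> real_of_ereal (mu i (restr (Ii i) (\<lambda>_. \<bar>K\<bar>)))"
      by (rule real_of_ereal_positive_mono[OF mu_nonneg[where i=i, OF input_in]])
    then show ?thesis using B[of i] unfolding Gam_gain_input by linarith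
  qed
  then show ?thesis using Gam_nonneg[OF s_nonneg] by (intro linf_plusI)
qed

lemma Gam_tendsto:
  assumes s: "\<And>n. s n \<in> linf_plus" and \<sigma>: "\<sigma> \<in> linf_plus"
    and lim: "\<And>j. (\<lambda>n. s n j) \<longlonglongrightarrow> \<sigma> j"
  shows "(\<lambda>n. \<Gamma> (s n) i) \<longlonglongrightarrow> \<Gamma> \<sigma> i"
proof (rule tendstoI)
  fix \<epsilon> :: real assume "0 < \<epsilon>"
  then have "0 < \<epsilon> / 2" by simp
  have \<sigma>_nonneg: "0 \<le> \<sigma> j" and s_nonneg: "0 \<le> s n j" for n j
    using linf_plus_nonneg[OF \<sigma>] linf_plus_nonneg[OF s] by auto
  have \<sigma>_input: "gain_input i \<sigma> \<in> linf_plus"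
    by (rule gain_input_in_linf_plus) (rule \<sigma>_nonneg)
  have s_input: "gain_input i (s n) \<in> linf_plus" for n
    by (rule gain_input_in_linf_plus) (rule s_nonneg)
  obtain \<delta> where \<delta>: "0 < \<delta>" "\<forall>t\<in>linf_plus. (\<forall>k. k \<notin> Ii i \<longrightarrow> t k = 0) \<longrightarrow>
      nrm (\<lambda>k. t k - gain_input i \<sigma> k) \<le> \<delta> \<longrightarrow>
      \<bar>real_of_ereal (mu i t) - real_of_ereal (mu i (gain_input i \<sigma>))\<bar> \<le> \<epsilon> / 2"
    using mu_continuous[OF \<sigma>_input gain_input_outside \<open>0 < \<epsilon> / 2\<close>] by blast
  have "\<forall>j\<in>Ii i. \<forall>\<^sub>F n in sequentially. dist (gam i j (s n j)) (gam i j (\<sigma> j)) < \<delta>"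
  proof
    fix j assume "j \<in> Ii i"
    then have "continuous_on {0..} (gam i j)" using gain_class_K unfolding class_K_def by blast
    from continuous_on_tendsto_compose[OF this lim]
    have "(\<lambda>n. gam i j (s n j)) \<longlonglongrightarrow> gam i j (\<sigma> j)" using \<sigma>_nonneg s_nonneg by simp
    then show "\<forall>\<^sub>F n in sequentially. dist (gam i j (s n j)) (gam i j (\<sigma> j)) < \<delta>"
      using \<delta>(1) by (rule tendstoD)
  qed
  from eventually_ball_finite[OF finite_neighbours this]
  show "\<forall>\<^sub>F n in sequentially. dist (\<Gamma> (s n) i) (\<Gamma> \<sigma> i) < \<epsilon>"
  proof (rule eventually_mono)
    fix n assume "\<forall>j\<in>Ii i. dist (gam i j (s n j)) (gam i j (\<sigma> j)) < \<delta>"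
    then have "nrm (\<lambda>k. gain_input i (s n) k - gain_input i \<sigma> k) \<le> \<delta>"
      using \<delta>(1) by (intro nrm_le) (auto simp: gain_input_def dist_real_def)
    with \<delta>(2)[rule_format, OF s_input gain_input_outside[rule_format]]
    have "\<bar>\<Gamma> (s n) i - \<Gamma> \<sigma> i\<bar> \<le> \<epsilon> / 2" unfolding Gam_gain_input by blast
    then show "dist (\<Gamma> (s n) i) (\<Gamma> \<sigma> i) < \<epsilon>" using \<open>0 < \<epsilon>\<close> by (simp add: dist_real_def)
  qed
qed

lemma Gam_le_Gam_rho:
  assumes "class_K \<rho>" "s \<in> linf_plus" shows "\<Gamma> s i \<le> Gam_rho Ii gam mu \<rho> s i"
proof -
  have "0 \<le> \<Gamma> s i" using Gam_nonneg linf_plus_nonneg[OF assms(2)] by blast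
  then show ?thesis unfolding Gam_rho_def using class_K_nonneg[OF assms(1)] by simp
qed

lemma Gam_rho_in_linf_plus:
  assumes \<rho>: "class_K \<rho>" and s: "s \<in> linf_plus" shows "Gam_rho Ii gam mu \<rho> s \<in> linf_plus"
proof (rule linf_plusI)
  have \<Gamma>s: "\<Gamma> s \<in> linf_plus" using Gam_in_linf_plus[OF s] .
  show "0 \<le> Gam_rho Ii gam mu \<rho> s i" for i
    using Gam_le_Gam_rho[OF \<rho> s, of i] linf_plus_nonneg[OF \<Gamma>s, of i] by linarith
  show "Gam_rho Ii gam mu \<rho> s i \<le> nrm (\<Gamma> s) + \<rho> (nrm (\<Gamma> s))" for i
    using linf_plus_le_nrm[OF \<Gamma>s, of i] class_K_mono[OF \<rho> linf_plus_nonneg[OF \<Gamma>s, of i]]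
    unfolding Gam_rho_def by (simp add: add_mono)
qed

abbreviation \<Gamma>_hat :: "('i \<Rightarrow> real) \<Rightarrow> 'i \<Rightarrow> real" where
  "\<Gamma>_hat \<equiv> Gam_hat Ii gam mu"

lemma Gam_hat_in_linf_plus:
  assumes s: "s \<in> linf_plus" shows "\<Gamma>_hat s \<in> linf_plus"
proof (rule linf_plusI)
  have \<Gamma>s: "\<Gamma> s \<in> linf_plus" using Gam_in_linf_plus[OF s] .
  show "0 \<le> \<Gamma>_hat s i" for i
    using linf_plus_nonneg[OF s, of i] unfolding Gam_hat_def by simp
  show "\<Gamma>_hat s i \<le> nrm s + nrm (\<Gamma> s)" for i
    using linf_plus_le_nrm[OF s, of i] linf_plus_le_nrm[OF \<Gamma>s, of i]
      linf_plus_nonneg[OF s, of i] linf_plus_nonneg[OF \<Gamma>s, of i]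
    unfolding Gam_hat_def by linarith
qed

lemma Gam_hat_iterate_in_linf_plus:
  assumes "0 \<le> r" shows "(\<Gamma>_hat ^^ n) (\<lambda>_. r) \<in> linf_plus"
proof (induction n)
  case 0
  show ?case using assms by (auto intro: linf_plusI[of _ r])
next
  case (Suc n)
  then show ?case by (simp add: Gam_hat_in_linf_plus)
qed

lemma incseq_Gam_hat_iterate: "incseq (\<lambda>n. (\<Gamma>_hat ^^ n) s i)"
  unfolding incseq_Suc_iff by (simp add: Gam_hat_def)

lemma Gam_hat_iterate_subsolution:
  assumes "0 \<le> r"
  shows "(\<Gamma>_hat ^^ n) (\<lambda>_. r) i \<le> max r (\<Gamma> ((\<Gamma>_hat ^^ n) (\<lambda>_. r)) i)"
proof (induction n arbitrary: i)
  case 0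
  show ?case by simp
next
  case (Suc n)
  define x where "x = (\<Gamma>_hat ^^ n) (\<lambda>_. r)"
  have "0 \<le> x j" for j
    unfolding x_def by (rule linf_plus_nonneg[OF Gam_hat_iterate_in_linf_plus[OF assms]])
  then have "\<Gamma> x i \<le> \<Gamma> (\<Gamma>_hat x) i"
    by (rule Gam_mono) (simp add: Gam_hat_def)
  moreover have "x i \<le> max r (\<Gamma> x i)" using Suc.IH unfolding x_def .
  ultimately have "\<Gamma>_hat x i \<le> max r (\<Gamma> (\<Gamma>_hat x) i)"
    unfolding Gam_hat_def by linarith
  then show ?case by (simp add: x_def)
qed

lemma Gam_hat_iterate_le_supersolution:
  assumes "0 \<le> r" and r_le: "\<And>i. r \<le> s i" and super: "\<And>i. \<Gamma> s i \<le> s i"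
  shows "(\<Gamma>_hat ^^ n) (\<lambda>_. r) i \<le> s i"
proof (induction n arbitrary: i)
  case 0
  show ?case using r_le by simp
next
  case (Suc n)
  define x where "x = (\<Gamma>_hat ^^ n) (\<lambda>_. r)"
  have "0 \<le> x j" for j
    unfolding x_def by (rule linf_plus_nonneg[OF Gam_hat_iterate_in_linf_plus[OF assms(1)]])
  then have "\<Gamma> x i \<le> \<Gamma> s i"
    by (rule Gam_mono) (use Suc.IH in \<open>simp add: x_def\<close>)
  moreover have "x i \<le> s i" using Suc.IH unfolding x_def .
  ultimately have "\<Gamma>_hat x i \<le> s i"
    using super[of i] unfolding Gam_hat_def by simp
  then show ?case by (simp add: x_def)
qed

lemma Gam_iterate_in_linf_plus: "s \<in> linf_plus \<Longrightarrow> (\<Gamma> ^^ n) s \<in> linf_plus"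
  by (induction n) (simp_all add: Gam_in_linf_plus)

lemma Gam_rho_iterate_in_linf_plus:
  "class_K \<rho> \<Longrightarrow> s \<in> linf_plus \<Longrightarrow> (Gam_rho Ii gam mu \<rho> ^^ n) s \<in> linf_plus"
  by (induction n) (simp_all add: Gam_rho_in_linf_plus)

lemma Gam_iterate_le_Gam_rho_iterate:
  assumes \<rho>: "class_K \<rho>" and s: "s \<in> linf_plus"
  shows "(\<Gamma> ^^ n) s i \<le> (Gam_rho Ii gam mu \<rho> ^^ n) s i"
proof (induction n arbitrary: i)
  case 0
  show ?case by simp
next
  case (Suc n)
  let ?x = "(\<Gamma> ^^ n) s" and ?y = "(Gam_rho Ii gam mu \<rho> ^^ n) s"
  have "0 \<le> ?x j" for j using linf_plus_nonneg[OF Gam_iterate_in_linf_plus[OF s]] .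
  then have "\<Gamma> ?x i \<le> \<Gamma> ?y i" by (rule Gam_mono) (rule Suc.IH)
  also have "\<dots> \<le> Gam_rho Ii gam mu \<rho> ?y i"
    by (rule Gam_le_Gam_rho[OF \<rho> Gam_rho_iterate_in_linf_plus[OF \<rho> s]])
  finally show ?case by simp
qed

lemma UGAS_Gam_iterate_below:
  assumes \<rho>: "class_K \<rho>" "UGAS (Gam_rho Ii gam mu \<rho>)" and s: "s \<in> linf_plus" and "0 < r"
  obtains N where "\<And>i. (\<Gamma> ^^ N) s i < r"
proof -
  obtain \<beta> where \<beta>: "class_KL \<beta>"
    "\<And>n. nrm ((Gam_rho Ii gam mu \<rho> ^^ n) s) \<le> \<beta> (nrm s) (real n)"
    using \<rho>(2) s unfolding UGAS_def by blast
  have "(\<beta> (nrm s) \<longlongrightarrow> 0) at_top"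
  proof (cases "nrm s = 0")
    case True
    have "\<forall>\<^sub>F t in at_top. \<beta> (nrm s) t = 0"
      using eventually_ge_at_top[of "0::real"]
    proof (rule eventually_mono)
      fix t :: real assume "0 \<le> t"
      then show "\<beta> (nrm s) t = 0" using \<beta>(1) True unfolding class_KL_def class_K_def by simp
    qed
    then show ?thesis by (simp add: tendsto_eventually)
  next
    case False
    have "0 \<le> nrm s" using linf_plus_le_nrm[OF s] linf_plus_nonneg[OF s] order_trans by blast
    with False show ?thesis using \<beta>(1) unfolding class_KL_def by simp
  qed
  then have "\<forall>\<^sub>F t in at_top. \<beta> (nrm s) t < r" using \<open>0 < r\<close> by (rule order_tendstoD)
  then obtain T where T: "\<And>t. T \<le> t \<Longrightarrow> \<beta> (nrm s) t < r"
    unfolding eventually_at_top_linorder by blast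
  show thesis
  proof (rule that)
    fix i
    define N where "N = nat \<lceil>T\<rceil>"
    have "(\<Gamma> ^^ N) s i \<le> (Gam_rho Ii gam mu \<rho> ^^ N) s i"
      by (rule Gam_iterate_le_Gam_rho_iterate[OF \<rho>(1) s])
    also have "\<dots> \<le> nrm ((Gam_rho Ii gam mu \<rho> ^^ N) s)"
      by (rule linf_plus_le_nrm[OF Gam_rho_iterate_in_linf_plus[OF \<rho>(1) s]])
    also have "\<dots> \<le> \<beta> (nrm s) (real N)" by (rule \<beta>(2))
    also have "\<dots> < r" by (rule T) (simp add: N_def real_nat_ceiling_ge)
    finally show "(\<Gamma> ^^ N) s i < r" .
  qed
qed

lemma le_Gam_iterate_outside_reach:
  assumes s: "s \<in> linf_plus" and fixed: "\<And>i. s i = max r (\<Gamma> s i)"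
  shows "i \<notin> reach_within Ii {i. \<Gamma> s i \<le> r} k \<Longrightarrow> s i \<le> (\<Gamma> ^^ k) s i"
proof (induction k arbitrary: i)
  case 0
  then show ?case by simp
next
  case (Suc k)
  let ?X = "{i. \<Gamma> s i \<le> r}"
  have "i \<notin> ?X" using Suc.prems subset_reach_within[of ?X Ii "Suc k"] by blast
  then have si: "s i = \<Gamma> s i" using fixed[of i] by simp
  have outside: "j \<notin> reach_within Ii ?X k" if "j \<in> Ii i" for j using Suc.prems that by auto
  \<comment> \<open>\<Gamma> s i only sees the neighbours of i, on which the induction hypothesis applies\<close>
  define z where "z j = min (s j) ((\<Gamma> ^^ k) s j)" for j
  have "\<Gamma> s i = \<Gamma> z i"
    by (rule Gam_cong) (use Suc.IH outside in \<open>simp add: z_def\<close>)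
  also have "\<dots> \<le> \<Gamma> ((\<Gamma> ^^ k) s) i"
    using linf_plus_nonneg[OF s] linf_plus_nonneg[OF Gam_iterate_in_linf_plus[OF s]]
    by (intro Gam_mono) (simp_all add: z_def)
  finally show ?case using si by simp
qed

lemma fixed_point_reach_all:
  assumes \<rho>: "class_K \<rho>" "UGAS (Gam_rho Ii gam mu \<rho>)" and "0 < r"
    and s: "s \<in> linf_plus" and fixed: "\<And>i. s i = max r (\<Gamma> s i)"
  obtains N where "\<And>i. i \<in> reach_within Ii {i. \<Gamma> s i \<le> r} N"
proof -
  obtain N where N: "\<And>i. (\<Gamma> ^^ N) s i < r"
    using UGAS_Gam_iterate_below[OF \<rho> s \<open>0 < r\<close>] by blast
  have "i \<in> reach_within Ii {i. \<Gamma> s i \<le> r} N" for i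
    using le_Gam_iterate_outside_reach[OF s fixed, of i N] N[of i] fixed[of i] by force
  then show thesis by (rule that)
qed

lemma gains_increment_lower_bound:
  assumes inv: "ptw_equicont {inv_into {0..} (gam i j) | i j. j \<in> Ii i}" and "0 < \<eta>"
  obtains m where "0 < m" "\<And>i j a. j \<in> Ii i \<Longrightarrow> a \<in> {0..M} \<Longrightarrow> m \<le> gam i j (a + \<eta>) - gam i j a"
proof -
  let ?F = "{gam i j | i j. j \<in> Ii i}"
  have F_K: "class_K f" if "f \<in> ?F" for f using that gain_class_K by blast
  have "(\<lambda>f. inv_into {0..} f) ` ?F = {inv_into {0..} (gam i j) | i j. j \<in> Ii i}" by auto
  then have F_inv: "ptw_equicont ((\<lambda>f. inv_into {0..} f) ` ?F)" using inv by simp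
  obtain m where m: "0 < m" "\<And>f a. f \<in> ?F \<Longrightarrow> a \<in> {0..M} \<Longrightarrow> m \<le> f (a + \<eta>) - f a"
    using uniform_increment_lower_bound[OF F_K gains_equicont F_inv \<open>0 < \<eta>\<close>, where M=M] by blast
  show thesis
  proof (rule that[OF m(1)])
    fix i j a assume "j \<in> Ii i" "a \<in> {0..M}"
    then show "m \<le> gam i j (a + \<eta>) - gam i j a" by (intro m(2)) auto
  qed
qed

lemma Gam_gap_from_neighbour:
  assumes \<zeta>: "class_K \<zeta>" "mu_sensitive Ii mu \<zeta>" and j: "j \<in> Ii i"
    and s: "s \<in> linf_plus" and t: "t \<in> linf_plus" and le: "\<And>k. s k \<le> t k"
    and gap: "s j + e \<le> t j" and "0 \<le> e"
    and "0 \<le> m" and increment: "\<And>a. a \<in> {0..nrm s} \<Longrightarrow> m \<le> gam i j (a + e) - gam i j a"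
  shows "\<zeta> m \<le> \<Gamma> t i - \<Gamma> s i"
proof -
  have "s j \<in> {0..nrm s}" using linf_plus_nonneg[OF s] linf_plus_le_nrm[OF s] by simp
  then have "m \<le> gam i j (s j + e) - gam i j (s j)" by (rule increment)
  moreover have "gam i j (s j + e) \<le> gam i j (t j)"
    using class_K_mono[OF gain_class_K[OF j] _ gap] linf_plus_nonneg[OF s, of j] \<open>0 \<le> e\<close> by simp
  ultimately have m: "m \<le> gam i j (t j) - gam i j (s j)" by linarith
  have s_input: "gain_input i s \<in> linf_plus"
    by (rule gain_input_in_linf_plus) (rule linf_plus_nonneg[OF s])
  have t_input: "gain_input i t \<in> linf_plus"
    by (rule gain_input_in_linf_plus) (rule linf_plus_nonneg[OF t])
  have "gain_input i s k \<le> gain_input i t k" for k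
    using gain_class_K class_K_mono linf_plus_nonneg[OF s] le unfolding gain_input_def by auto
  then have "\<zeta> (gain_input i t j - gain_input i s j) \<le>
      real_of_ereal (mu i (restr (Ii i) (gain_input i t))) - real_of_ereal (mu i (restr (Ii i) (gain_input i s)))"
    using \<zeta>(2) j s_input t_input unfolding mu_sensitive_def by blast
  moreover have "gain_input i t j = gam i j (t j)" "gain_input i s j = gam i j (s j)"
    using j unfolding gain_input_def by simp_all
  ultimately have "\<zeta> (gam i j (t j) - gam i j (s j)) \<le> \<Gamma> t i - \<Gamma> s i"
    by (simp add: restr_gain_input Gam_gain_input)
  moreover have "\<zeta> m \<le> \<zeta> (gam i j (t j) - gam i j (s j))"
    using class_K_mono[OF \<zeta>(1) \<open>0 \<le> m\<close> m] .
  ultimately show ?thesis by linarith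
qed

lemma fixed_point_gap_on_reach:
  assumes inv: "ptw_equicont {inv_into {0..} (gam i j) | i j. j \<in> Ii i}"
    and \<zeta>: "class_K \<zeta>" "mu_sensitive Ii mu \<zeta>"
    and s: "s \<in> linf_plus" and fixed: "\<And>i. s i = max r (\<Gamma> s i)"
    and t: "t \<in> linf_plus" and le: "\<And>i. s i \<le> t i" and super: "\<And>i. \<Gamma> t i \<le> t i"
    and above: "\<And>i. r + c \<le> t i" and "0 < c"
  shows "\<exists>e>0. \<forall>i\<in>reach_within Ii {i. \<Gamma> s i \<le> r} k. e \<le> t i - s i"
proof (induction k)
  case 0
  have "c \<le> t i - s i" if "\<Gamma> s i \<le> r" for i using fixed[of i] above[of i] that by simp
  then show ?case using \<open>0 < c\<close> by auto
next
  case (Suc k)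
  let ?R = "reach_within Ii {i. \<Gamma> s i \<le> r}"
  obtain e where e: "0 < e" "\<And>i. i \<in> ?R k \<Longrightarrow> e \<le> t i - s i" using Suc.IH by blast
  obtain m where m: "0 < m" "\<And>i j a. j \<in> Ii i \<Longrightarrow> a \<in> {0..nrm s} \<Longrightarrow> m \<le> gam i j (a + e) - gam i j a"
    using gains_increment_lower_bound[OF inv \<open>0 < e\<close>] by blast
  define e' where "e' = min e (min c (\<zeta> m))"
  have "0 < e'" using e(1) \<open>0 < c\<close> class_K_pos[OF \<zeta>(1) m(1)] by (simp add: e'_def)
  moreover have "e' \<le> t i - s i" if i: "i \<in> ?R (Suc k)" for i
  proof (cases "i \<in> ?R k")
    case True
    then show ?thesis using e(2)[of i] by (simp add: e'_def)
  next
    case False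
    then obtain j where j: "j \<in> Ii i" "j \<in> ?R k" using i by auto
    show ?thesis
    proof (cases "\<Gamma> s i \<le> r")
      case True
      then show ?thesis using fixed[of i] above[of i] by (simp add: e'_def)
    next
      case False
      have "s j + e \<le> t j" using e(2)[OF j(2)] by simp
      then have "\<zeta> m \<le> \<Gamma> t i - \<Gamma> s i"
        using Gam_gap_from_neighbour[OF \<zeta> j(1) s t le _ _ less_imp_le[OF m(1)] m(2)[OF j(1)]] e(1)
        by simp
      then show ?thesis using False fixed[of i] super[of i] by (simp add: e'_def)
    qed
  qed
  ultimately show ?case by blast
qed

end

locale mbi_gain_setting = gain_setting Ii gam mu
  for Ii :: "'i \<Rightarrow> 'i set" and gam and mu +
  assumes MBI: "oplus_MBI Ii gam mu"
begin

abbreviation \<sigma>_star :: "real \<Rightarrow> 'i \<Rightarrow> real" where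
  "\<sigma>_star \<equiv> sigma_star Ii gam mu"

lemma Gam_hat_iterates_bounded:
  assumes "0 \<le> r" obtains B where "\<And>n i. (\<Gamma>_hat ^^ n) (\<lambda>_. r) i \<le> B"
proof -
  obtain \<phi> where \<phi>: "\<forall>s\<in>linf_plus. \<forall>b\<in>linf_plus.
      (\<forall>i. s i \<le> max (b i) (\<Gamma> s i)) \<longrightarrow> nrm s \<le> \<phi> (nrm b)"
    using MBI unfolding oplus_MBI_def by blast
  have const: "(\<lambda>_::'i. r) \<in> linf_plus" using assms by (intro linf_plusI[of _ r]) auto
  have "(\<Gamma>_hat ^^ n) (\<lambda>_. r) i \<le> \<phi> r" for n i
  proof -
    note iterate = Gam_hat_iterate_in_linf_plus[OF assms, where n=n]
    have "nrm ((\<Gamma>_hat ^^ n) (\<lambda>_. r)) \<le> \<phi> (nrm (\<lambda>_::'i. r))"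
      using \<phi>[rule_format, OF iterate const] Gam_hat_iterate_subsolution[OF assms, where n=n] by blast
    then show ?thesis using linf_plus_le_nrm[OF iterate, of i] assms by (simp add: nrm_const)
  qed
  then show thesis by (rule that)
qed

lemma Gam_hat_iterate_tendsto_sigma_star:
  assumes "0 \<le> r" shows "(\<lambda>n. (\<Gamma>_hat ^^ n) (\<lambda>_. r) i) \<longlonglongrightarrow> \<sigma>_star r i"
proof -
  obtain B where "\<And>n i. (\<Gamma>_hat ^^ n) (\<lambda>_. r) i \<le> B"
    using Gam_hat_iterates_bounded[OF assms] by blast
  then have "bdd_above (range (\<lambda>n. (\<Gamma>_hat ^^ n) (\<lambda>_. r) i))" by (intro bdd_aboveI2)
  then show ?thesis
    unfolding sigma_star_def by (rule LIMSEQ_incseq_SUP) (rule incseq_Gam_hat_iterate)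
qed

lemma Gam_hat_iterate_le_sigma_star: "0 \<le> r \<Longrightarrow> (\<Gamma>_hat ^^ n) (\<lambda>_. r) i \<le> \<sigma>_star r i"
  by (rule incseq_le[OF incseq_Gam_hat_iterate Gam_hat_iterate_tendsto_sigma_star])

lemma sigma_star_ge: "0 \<le> r \<Longrightarrow> r \<le> \<sigma>_star r i"
  using Gam_hat_iterate_le_sigma_star[of r 0 i] by simp

lemma sigma_star_in_linf_plus:
  assumes "0 \<le> r" shows "\<sigma>_star r \<in> linf_plus"
proof -
  obtain B where B: "\<And>n i. (\<Gamma>_hat ^^ n) (\<lambda>_. r) i \<le> B"
    using Gam_hat_iterates_bounded[OF assms] by blast
  show ?thesis
  proof (rule linf_plusI)
    show "\<sigma>_star r i \<le> B" for i
      by (rule LIMSEQ_le_const2[OF Gam_hat_iterate_tendsto_sigma_star[OF assms]]) (use B in auto)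
    show "0 \<le> \<sigma>_star r i" for i
      using sigma_star_ge[OF assms, of i] assms by linarith
  qed
qed

lemma sigma_star_fixed_point:
  assumes "0 \<le> r" shows "\<sigma>_star r i = max r (\<Gamma> (\<sigma>_star r) i)"
proof (rule antisym)
  let ?x = "\<lambda>n. (\<Gamma>_hat ^^ n) (\<lambda>_. r)"
  have x_in: "?x n \<in> linf_plus" for n using Gam_hat_iterate_in_linf_plus[OF assms] .
  have \<sigma>_in: "\<sigma>_star r \<in> linf_plus" using sigma_star_in_linf_plus[OF assms] .
  have lim: "(\<lambda>n. ?x n j) \<longlonglongrightarrow> \<sigma>_star r j" for j
    using Gam_hat_iterate_tendsto_sigma_star[OF assms] .
  have bound: "?x n i \<le> max r (\<Gamma> (\<sigma>_star r) i)" for n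
  proof -
    have "0 \<le> ?x n j" for j using linf_plus_nonneg[OF x_in] .
    then have "\<Gamma> (?x n) i \<le> \<Gamma> (\<sigma>_star r) i"
      by (rule Gam_mono) (rule Gam_hat_iterate_le_sigma_star[OF assms])
    then show ?thesis using Gam_hat_iterate_subsolution[OF assms, of n i] by linarith
  qed
  show "\<sigma>_star r i \<le> max r (\<Gamma> (\<sigma>_star r) i)"
    by (rule LIMSEQ_le_const2[OF lim]) (use bound in auto)
  have step: "\<Gamma> (?x n) i \<le> ?x (Suc n) i" for n by (simp add: Gam_hat_def)
  have "\<Gamma> (\<sigma>_star r) i \<le> \<sigma>_star r i"
    by (rule LIMSEQ_le[OF Gam_tendsto[OF x_in \<sigma>_in lim] LIMSEQ_Suc[OF lim]]) (use step in auto)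
  then show "max r (\<Gamma> (\<sigma>_star r) i) \<le> \<sigma>_star r i" using sigma_star_ge[OF assms] by simp
qed

lemma sigma_star_least:
  assumes "0 \<le> r" "\<And>i. r \<le> s i" "\<And>i. \<Gamma> s i \<le> s i"
  shows "\<sigma>_star r i \<le> s i"
  by (rule LIMSEQ_le_const2[OF Gam_hat_iterate_tendsto_sigma_star[OF assms(1)]])
    (use Gam_hat_iterate_le_supersolution[OF assms] in auto)

lemma fixed_point_zero:
  assumes s: "s \<in> linf_plus" and fixed: "\<And>i. s i \<le> max 0 (\<Gamma> s i)"
  shows "s = (\<lambda>_. 0)"
proof -
  obtain \<phi> where \<phi>: "class_Kinf \<phi>" "\<forall>s\<in>linf_plus. \<forall>b\<in>linf_plus.
      (\<forall>i. s i \<le> max (b i) (\<Gamma> s i)) \<longrightarrow> nrm s \<le> \<phi> (nrm b)"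
    using MBI unfolding oplus_MBI_def by blast
  have zero_in: "(\<lambda>_::'i. 0::real) \<in> linf_plus" by (intro linf_plusI[of _ 0]) auto
  have "nrm s \<le> \<phi> (nrm (\<lambda>_::'i. 0::real))"
    using \<phi>(2)[rule_format, OF s zero_in] fixed by simp
  then have "nrm s \<le> 0" using \<phi>(1) by (simp add: nrm_const class_Kinf_def class_K_def)
  then have "s i = 0" for i using linf_plus_le_nrm[OF s, of i] linf_plus_nonneg[OF s, of i] by simp
  then show ?thesis by auto
qed

lemma sigma_star_gap:
  assumes \<rho>: "class_K \<rho>" "UGAS (Gam_rho Ii gam mu \<rho>)"
    and inv: "ptw_equicont {inv_into {0..} (gam i j) | i j. j \<in> Ii i}"
    and \<zeta>: "class_K \<zeta>" "mu_sensitive Ii mu \<zeta>"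
    and "0 < r" and s: "s \<in> linf_plus" and fixed: "\<And>i. s i = max r (\<Gamma> s i)"
    and "r < r'" and below: "\<And>i. s i \<le> \<sigma>_star r' i"
  obtains e where "0 < e" "\<And>i. s i + e \<le> \<sigma>_star r' i"
proof -
  have "0 \<le> r'" using \<open>0 < r\<close> \<open>r < r'\<close> by linarith
  obtain N where N: "\<And>i. i \<in> reach_within Ii {i. \<Gamma> s i \<le> r} N"
    using fixed_point_reach_all[OF \<rho> \<open>0 < r\<close> s fixed] by blast
  have super: "\<Gamma> (\<sigma>_star r') i \<le> \<sigma>_star r' i" for i
    using sigma_star_fixed_point[OF \<open>0 \<le> r'\<close>, of i] by linarith
  have above: "r + (r' - r) \<le> \<sigma>_star r' i" for i
    using sigma_star_ge[OF \<open>0 \<le> r'\<close>] by simp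
  obtain e where e: "0 < e" "\<forall>i\<in>reach_within Ii {i. \<Gamma> s i \<le> r} N. e \<le> \<sigma>_star r' i - s i"
    using fixed_point_gap_on_reach[OF inv \<zeta> s fixed sigma_star_in_linf_plus[OF \<open>0 \<le> r'\<close>]
        below super above] \<open>r < r'\<close> by auto
  show thesis
  proof (rule that[OF e(1)])
    fix i show "s i + e \<le> \<sigma>_star r' i" using e(2) N[of i] by auto
  qed
qed

lemma sigma_star_close:
  assumes cont: "\<forall>r0\<ge>0. \<forall>\<epsilon>>0. \<exists>\<delta>>0. \<forall>r\<ge>0. \<bar>r - r0\<bar> \<le> \<delta> \<longrightarrow>
      nrm (\<lambda>i. \<sigma>_star r i - \<sigma>_star r0 i) \<le> \<epsilon>"
    and "0 \<le> r0" "0 < \<epsilon>"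
  obtains \<delta> where "0 < \<delta>" "\<And>r i. 0 \<le> r \<Longrightarrow> \<bar>r - r0\<bar> \<le> \<delta> \<Longrightarrow> \<bar>\<sigma>_star r i - \<sigma>_star r0 i\<bar> \<le> \<epsilon>"
proof -
  obtain \<delta> where \<delta>: "0 < \<delta>" "\<And>r. 0 \<le> r \<Longrightarrow> \<bar>r - r0\<bar> \<le> \<delta> \<Longrightarrow> nrm (\<lambda>i. \<sigma>_star r i - \<sigma>_star r0 i) \<le> \<epsilon>"
    using cont \<open>0 \<le> r0\<close> \<open>0 < \<epsilon>\<close> by blast
  show thesis
  proof (rule that[OF \<delta>(1)])
    fix r i assume "0 \<le> r" "\<bar>r - r0\<bar> \<le> \<delta>"
    then show "\<bar>\<sigma>_star r i - \<sigma>_star r0 i\<bar> \<le> \<epsilon>"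
      using abs_diff_le_nrm[OF sigma_star_in_linf_plus sigma_star_in_linf_plus, of r r0 i]
        \<delta>(2) \<open>0 \<le> r0\<close> by fastforce
  qed
qed

lemma Inf_sigma_star_dominating_levels:
  assumes cont: "\<forall>r0\<ge>0. \<forall>\<epsilon>>0. \<exists>\<delta>>0. \<forall>r\<ge>0. \<bar>r - r0\<bar> \<le> \<delta> \<longrightarrow>
      nrm (\<lambda>i. \<sigma>_star r i - \<sigma>_star r0 i) \<le> \<epsilon>"
    and "0 \<le> r" and "S = {r'. r \<le> r' \<and> (\<forall>i. s i \<le> \<sigma>_star r' i)}" and "S \<noteq> {}"
  shows "Inf S \<in> S"
proof -
  have bdd: "bdd_below S" using assms(3) by (auto intro: bdd_belowI[of _ r])
  have "r \<le> Inf S" using \<open>S \<noteq> {}\<close> by (rule cInf_greatest) (simp add: assms(3))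
  then have "0 \<le> Inf S" using \<open>0 \<le> r\<close> by linarith
  have "s i \<le> \<sigma>_star (Inf S) i" for i
  proof (rule field_le_epsilon)
    fix \<epsilon> :: real assume "0 < \<epsilon>"
    obtain \<delta> where \<delta>: "0 < \<delta>"
      "\<And>r' i. 0 \<le> r' \<Longrightarrow> \<bar>r' - Inf S\<bar> \<le> \<delta> \<Longrightarrow> \<bar>\<sigma>_star r' i - \<sigma>_star (Inf S) i\<bar> \<le> \<epsilon>"
      using sigma_star_close[OF cont \<open>0 \<le> Inf S\<close> \<open>0 < \<epsilon>\<close>] by blast
    have "Inf S < Inf S + \<delta>" using \<delta>(1) by simp
    then obtain r' where r': "r' \<in> S" "r' < Inf S + \<delta>"
      using cInf_less_iff[OF \<open>S \<noteq> {}\<close> bdd] by blast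
    have "Inf S \<le> r'" using cInf_lower[OF r'(1) bdd] .
    then have "\<bar>\<sigma>_star r' i - \<sigma>_star (Inf S) i\<bar> \<le> \<epsilon>"
      using \<delta>(2) r'(2) \<open>0 \<le> Inf S\<close> by simp
    moreover have "s i \<le> \<sigma>_star r' i" using r'(1) assms(3) by simp
    ultimately show "s i \<le> \<sigma>_star (Inf S) i + \<epsilon>" by linarith
  qed
  then show ?thesis using \<open>r \<le> Inf S\<close> assms(3) by simp
qed

lemma sigma_star_lower_dominating_level:
  assumes \<rho>: "class_K \<rho>" "UGAS (Gam_rho Ii gam mu \<rho>)"
    and inv: "ptw_equicont {inv_into {0..} (gam i j) | i j. j \<in> Ii i}"
    and \<zeta>: "class_K \<zeta>" "mu_sensitive Ii mu \<zeta>"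
    and cont: "\<forall>r0\<ge>0. \<forall>\<epsilon>>0. \<exists>\<delta>>0. \<forall>r\<ge>0. \<bar>r - r0\<bar> \<le> \<delta> \<longrightarrow>
      nrm (\<lambda>i. \<sigma>_star r i - \<sigma>_star r0 i) \<le> \<epsilon>"
    and "0 < r" and s: "s \<in> linf_plus" and fixed: "\<And>i. s i = max r (\<Gamma> s i)"
    and "r < r0" and below: "\<And>i. s i \<le> \<sigma>_star r0 i"
  obtains r' where "r \<le> r'" "r' < r0" "\<And>i. s i \<le> \<sigma>_star r' i"
proof -
  obtain e where e: "0 < e" "\<And>i. s i + e \<le> \<sigma>_star r0 i"
    using sigma_star_gap[OF \<rho> inv \<zeta> \<open>0 < r\<close> s fixed \<open>r < r0\<close> below] by blast
  have "0 \<le> r0" using \<open>r < r0\<close> \<open>0 < r\<close> by linarith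
  obtain \<delta> where \<delta>: "0 < \<delta>"
    "\<And>r' i. 0 \<le> r' \<Longrightarrow> \<bar>r' - r0\<bar> \<le> \<delta> \<Longrightarrow> \<bar>\<sigma>_star r' i - \<sigma>_star r0 i\<bar> \<le> e"
    using sigma_star_close[OF cont \<open>0 \<le> r0\<close> e(1)] by blast
  define r' where "r' = max r (r0 - \<delta>)"
  have "r \<le> r'" "r' < r0" "\<bar>r' - r0\<bar> \<le> \<delta>" "0 \<le> r'"
    using \<open>r < r0\<close> \<delta>(1) \<open>0 < r\<close> unfolding r'_def by auto
  moreover have "s i \<le> \<sigma>_star r' i" for i
    using \<delta>(2)[OF \<open>0 \<le> r'\<close> \<open>\<bar>r' - r0\<bar> \<le> \<delta>\<close>, of i] e(2)[of i] by linarith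
  ultimately show thesis using that by blast
qed

lemma fixed_point_eq_sigma_star:
  assumes \<rho>: "class_K \<rho>" "UGAS (Gam_rho Ii gam mu \<rho>)"
    and inv: "ptw_equicont {inv_into {0..} (gam i j) | i j. j \<in> Ii i}"
    and \<zeta>: "class_K \<zeta>" "mu_sensitive Ii mu \<zeta>"
    and cont: "\<forall>r0\<ge>0. \<forall>\<epsilon>>0. \<exists>\<delta>>0. \<forall>r\<ge>0. \<bar>r - r0\<bar> \<le> \<delta> \<longrightarrow>
      nrm (\<lambda>i. \<sigma>_star r i - \<sigma>_star r0 i) \<le> \<epsilon>"
    and "0 < r" and s: "s \<in> linf_plus" and fixed: "\<And>i. s i = max r (\<Gamma> s i)"
  shows "s = \<sigma>_star r"
proof -
  define S where "S = {r'. r \<le> r' \<and> (\<forall>i. s i \<le> \<sigma>_star r' i)}"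
  have "0 \<le> r" using \<open>0 < r\<close> by simp
  have "s i \<le> \<sigma>_star (max r (nrm s)) i" for i
  proof -
    have "0 \<le> max r (nrm s)" using \<open>0 \<le> r\<close> by simp
    then show ?thesis
      using linf_plus_le_nrm[OF s, of i] sigma_star_ge[of "max r (nrm s)" i] by simp
  qed
  then have "max r (nrm s) \<in> S" unfolding S_def by simp
  then have "Inf S \<in> S" using Inf_sigma_star_dominating_levels[OF cont \<open>0 \<le> r\<close> S_def] by blast
  have "Inf S = r"
  proof (rule ccontr)
    assume "Inf S \<noteq> r"
    with \<open>Inf S \<in> S\<close> have "r < Inf S" "\<And>i. s i \<le> \<sigma>_star (Inf S) i" unfolding S_def by auto
    then obtain r' where "r \<le> r'" "r' < Inf S" "\<And>i. s i \<le> \<sigma>_star r' i"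
      using sigma_star_lower_dominating_level[OF \<rho> inv \<zeta> cont \<open>0 < r\<close> s fixed] by blast
    then have "r' \<in> S" unfolding S_def by simp
    then have "Inf S \<le> r'" by (rule cInf_lower) (auto simp: S_def intro: bdd_belowI[of _ r])
    with \<open>r' < Inf S\<close> show False by simp
  qed
  have "\<sigma>_star r i \<le> s i" for i
    using sigma_star_least[OF \<open>0 \<le> r\<close>] fixed by (metis max.cobounded1 max.cobounded2)
  moreover have "s i \<le> \<sigma>_star r i" for i using \<open>Inf S \<in> S\<close> \<open>Inf S = r\<close> unfolding S_def by simp
  ultimately show ?thesis by (intro ext antisym)
qed

end

theorem proposition3p16:
  fixes Ii :: "'i::countable \<Rightarrow> 'i set"
    and gam :: "'i \<Rightarrow> 'i \<Rightarrow> real \<Rightarrow> real"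
    and mu :: "'i \<Rightarrow> ('i \<Rightarrow> real) \<Rightarrow> ereal"
  assumes gain: "gain_operator Ii gam mu"
    and MBI: "oplus_MBI Ii gam mu"
    and rho: "\<exists>\<rho>. class_Kinf \<rho> \<and> UGAS (Gam_rho Ii gam mu \<rho>)"
    and inv_eq: "ptw_equicont {inv_into {0..} (gam i j) | i j. j \<in> Ii i}"
    and zeta: "\<exists>\<zeta>. class_Kinf \<zeta> \<and>
       (\<forall>i. \<forall>j\<in>Ii i. \<forall>s1\<in>linf_plus. \<forall>s2\<in>linf_plus. (\<forall>k. s1 k \<le> s2 k) \<longrightarrow>
          real_of_ereal (mu i (restr (Ii i) s2)) - real_of_ereal (mu i (restr (Ii i) s1))
            \<ge> \<zeta> (s2 j - s1 j))"
    and cont: "\<forall>r0\<ge>0. \<forall>\<epsilon>>0. \<exists>\<delta>>0. \<forall>r\<ge>0. \<bar>r - r0\<bar> \<le> \<delta> \<longrightarrow>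
       nrm (\<lambda>i. sigma_star Ii gam mu r i - sigma_star Ii gam mu r0 i) \<le> \<epsilon>"
  shows "\<forall>r\<ge>0. \<exists>!s. s \<in> linf_plus \<and> s = (\<lambda>i. max r (Gam Ii gam mu s i))"
proof -
  interpret mbi_gain_setting Ii gam mu
    using gain MBI by (intro mbi_gain_setting.intro gain_operator_imp_gain_setting) unfold_locales
  obtain \<rho> where \<rho>: "class_K \<rho>" "UGAS (Gam_rho Ii gam mu \<rho>)"
    using rho unfolding class_Kinf_def by blast
  obtain \<zeta> where \<zeta>: "class_K \<zeta>" "mu_sensitive Ii mu \<zeta>"
    using zeta unfolding class_Kinf_def mu_sensitive_def by blast
  have unique: "s = \<sigma>_star r" if "0 \<le> r" "s \<in> linf_plus" "s = (\<lambda>i. max r (\<Gamma> s i))" for r s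
  proof (cases "r = 0")
    case True
    then have "s = (\<lambda>_. 0)" "\<sigma>_star r = (\<lambda>_. 0)"
      using that fixed_point_zero sigma_star_in_linf_plus sigma_star_fixed_point by (metis order_refl)+
    then show ?thesis by simp
  next
    case False
    with that(1) have "0 < r" by simp
    have "s i = max r (\<Gamma> s i)" for i using fun_cong[OF that(3), of i] by simp
    with \<open>0 < r\<close> that(2) show ?thesis by (rule fixed_point_eq_sigma_star[OF \<rho> inv_eq \<zeta> cont])
  qed
  show ?thesis
    using sigma_star_in_linf_plus sigma_star_fixed_point unique by blast
qed

end
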